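(* Let $A=(V_\exists,V_\forall,E,E_f)$ be a fair game arena and $\alpha$ an $\omega$-regular winning condition over $V$. For every $v\in V$, if $$\exists s\in\Sigma.\,\forall t\in\Pi.\,\mathsf{fair}_\exists(\mathsf{play}_v(s,t))\wedge\big(\mathsf{fair}_\forall(\mathsf{play}_v(s,t))\Rightarrow\mathsf{play}_v(s,t)\in\alpha\big)$$ holds, then $$\exists s\in\Sigma.\,\forall t\in\Pi.\,\mathsf{fair}_\forall(\mathsf{play}_v(s,t))\Rightarrow\big(\mathsf{fair}_\exists(\mathsf{play}_v(s,t))\wedge\mathsf{play}_v(s,t)\in\alpha\big)$$ holds. Moreover, the converse fails in general: there exist a fair game arena, an $\omega$-regular condition $\alpha$ and a node $v$ satisfying the second formula but not the first.
   Context: A fair game arena $A=(V_\exists,V_\forall,E,E_f)$: finite node set $V=V_\exists\cup V_\forall$ (disjoint), right-total moves $E\subseteq V\times V$, fair moves $E_f\subseteq E$. A play is an infinite sequence $\tau=v_0v_1\ldots$ with $(v_j,v_{j+1})\in E$; $\tau_m$ is its sequence of moves; $\mathsf{Inf}$ denotes the set of elements occurring infinitely often. For $i\in\{\exists,\forall\}$, $\tau$ is $i$-fair ($\mathsf{fair}_i(\tau)$) if for all $u\in V_i\cap\mathsf{Inf}(\tau)$, every $(u,u')\in E_f$ is in $\mathsf{Inf}(\tau_m)$. A strategy for player $i$ is a function $p:V^*\cdot V_i\to V$ with $p(w\cdot u)\in E(u)$; $\Sigma$ ($\Pi$) is the set of strategies of $\exists$ ($\forall$); $\mathsf{play}_v(s,t)$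 is the unique play from $v$ compliant with $s$ and $t$. An $\omega$-regular winning condition is an $\omega$-regular language $\alpha\subseteq V^\omega$. *)

theory Defs
  imports Main
begin

definition fair_arena :: "'v set \<Rightarrow> 'v set \<Rightarrow> ('v \<times> 'v) set \<Rightarrow> ('v \<times> 'v) set \<Rightarrow> bool" where
  "fair_arena VE VA E Ef \<longleftrightarrow>
     finite (VE \<union> VA) \<and> VE \<inter> VA = {} \<and>
     E \<subseteq> (VE \<union> VA) \<times> (VE \<union> VA) \<and>
     (\<forall>u \<in> VE \<union> VA. \<exists>u'. (u, u') \<in> E) \<and>
     Ef \<subseteq> E"

definition strategy :: "'v set \<Rightarrow> ('v \<times> 'v) set \<Rightarrow> ('v list \<Rightarrow> 'v) \<Rightarrow> bool" where
  "strategy Vi E p \<longleftrightarrow> (\<forall>w u. u \<in> Vi \<longrightarrow> (u, p (w @ [u])) \<in> E)"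

fun hist :: "'v set \<Rightarrow> ('v list \<Rightarrow> 'v) \<Rightarrow> ('v list \<Rightarrow> 'v) \<Rightarrow> 'v \<Rightarrow> nat \<Rightarrow> 'v list" where
  "hist VE s t v 0 = [v]"
| "hist VE s t v (Suc n) =
     (let h = hist VE s t v n in h @ [if last h \<in> VE then s h else t h])"

definition play :: "'v set \<Rightarrow> ('v list \<Rightarrow> 'v) \<Rightarrow> ('v list \<Rightarrow> 'v) \<Rightarrow> 'v \<Rightarrow> nat \<Rightarrow> 'v" where
  "play VE s t v n = last (hist VE s t v n)"

definition infset :: "(nat \<Rightarrow> 'a) \<Rightarrow> 'a set" where
  "infset \<tau> = {x. infinite {n. \<tau> n = x}}"

definition moves :: "(nat \<Rightarrow> 'v) \<Rightarrow> nat \<Rightarrow> 'v \<times> 'v" where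
  "moves \<tau> n = (\<tau> n, \<tau> (Suc n))"

definition fair :: "'v set \<Rightarrow> ('v \<times> 'v) set \<Rightarrow> (nat \<Rightarrow> 'v) \<Rightarrow> bool" where
  "fair Vi Ef \<tau> \<longleftrightarrow>
     (\<forall>u \<in> Vi \<inter> infset \<tau>. \<forall>u'. (u, u') \<in> Ef \<longrightarrow> (u, u') \<in> infset (moves \<tau>))"

definition buchi_lang :: "'q set \<Rightarrow> 'q set \<Rightarrow> ('q \<times> 'a \<times> 'q) set \<Rightarrow> 'q set \<Rightarrow> (nat \<Rightarrow> 'a) set" where
  "buchi_lang Q I \<delta> F =
     {w. \<exists>r. r 0 \<in> I \<and> (\<forall>i. r i \<in> Q \<and> (r i, w i, r (Suc i)) \<in> \<delta>) \<and> infinite {i. r i \<in> F}}"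

definition omega_regular :: "'a set \<Rightarrow> (nat \<Rightarrow> 'a) set \<Rightarrow> bool" where
  "omega_regular V \<alpha> \<longleftrightarrow>
     \<alpha> \<subseteq> {w. \<forall>i. w i \<in> V} \<and>
     (\<exists>(Q :: nat set) I \<delta> F. finite Q \<and> I \<subseteq> Q \<and> F \<subseteq> Q \<and> \<alpha> = buchi_lang Q I \<delta> F)"

end

theory Submission
  imports Defs
begin

text \<open>The first half is a weakening: a strategy that is fair against every opponent and wins
  against every fair one in particular wins, fairly, against every fair opponent.

  For the converse, let \<forall> own node 0 with fair moves to 1 and to the sink 2, and let \<exists> own
  node 1 with fair moves back to 0 and to the sink 3; the condition forbids 3. Against a fair
  opponent, \<exists> wins by always returning to 0: infinitely many visits to 0 would force the move
  to 2, after which 0 and 1 are seen no more. If \<exists> must be fair unconditionally, \<forall> always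
  moves to 1; then \<exists> either never takes the fair move (1,3) although 1 recurs, or enters 3,
  where the play is lost while \<forall>, having visited 0 finitely often, counts as fair.\<close>

definition wins_fairly ::
    "'v set \<Rightarrow> 'v set \<Rightarrow> ('v \<times> 'v) set \<Rightarrow> ('v \<times> 'v) set \<Rightarrow> (nat \<Rightarrow> 'v) set \<Rightarrow> 'v \<Rightarrow> bool" where
  "wins_fairly VE VA E Ef \<alpha> v \<longleftrightarrow>
     (\<exists>s. strategy VE E s \<and> (\<forall>t. strategy VA E t \<longrightarrow>
        fair VE Ef (play VE s t v) \<and> (fair VA Ef (play VE s t v) \<longrightarrow> play VE s t v \<in> \<alpha>)))"

definition wins_against_fair ::
    "'v set \<Rightarrow> 'v set \<Rightarrow> ('v \<times> 'v) set \<Rightarrow> ('v \<times> 'v) set \<Rightarrow> (nat \<Rightarrow> 'v) set \<Rightarrow> 'v \<Rightarrow> bool" where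
  "wins_against_fair VE VA E Ef \<alpha> v \<longleftrightarrow>
     (\<exists>s. strategy VE E s \<and> (\<forall>t. strategy VA E t \<longrightarrow>
        fair VA Ef (play VE s t v) \<longrightarrow> fair VE Ef (play VE s t v) \<and> play VE s t v \<in> \<alpha>))"

lemma wins_fairly_imp_wins_against_fair:
  "wins_fairly VE VA E Ef \<alpha> v \<Longrightarrow> wins_against_fair VE VA E Ef \<alpha> v"
  unfolding wins_fairly_def wins_against_fair_def by blast

lemma omega_regular_always:
  assumes "A \<subseteq> V"
  shows "omega_regular V {w. \<forall>i. w i \<in> A}"
proof -
  have "{w. \<forall>i. w i \<in> A} = buchi_lang {0} {0} ({0} \<times> A \<times> {0}) {0::nat}"
  proof (intro set_eqI iffI)
    fix w :: "nat \<Rightarrow> _"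
    assume "w \<in> {w. \<forall>i. w i \<in> A}"
    then show "w \<in> buchi_lang {0} {0} ({0} \<times> A \<times> {0}) {0::nat}"
      unfolding buchi_lang_def by (intro CollectI exI[of _ "\<lambda>_. 0"]) simp
  next
    fix w :: "nat \<Rightarrow> _"
    assume "w \<in> buchi_lang {0} {0} ({0} \<times> A \<times> {0}) {0::nat}"
    then obtain r where "\<forall>i. (r i, w i, r (Suc i)) \<in> {0} \<times> A \<times> {0::nat}"
      unfolding buchi_lang_def by blast
    then show "w \<in> {w. \<forall>i. w i \<in> A}"
      by blast
  qed
  with assms show ?thesis
    unfolding omega_regular_def
    by (intro conjI exI[of _ "{0::nat}"] exI[of _ "{0::nat}"] exI[of _ "{0} \<times> A \<times> {0::nat}"]) auto
qed

lemma play_0 [simp]: "play VE s t v 0 = v"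
  by (simp add: play_def)

lemma play_Suc:
  "play VE s t v (Suc n) =
     (if play VE s t v n \<in> VE then s (hist VE s t v n) else t (hist VE s t v n))"
  by (simp add: play_def Let_def)

lemma hist_eq_butlast_snoc_play:
  "hist VE s t v n = butlast (hist VE s t v n) @ [play VE s t v n]"
proof -
  have "hist VE s t v n \<noteq> []"
    by (cases n) (simp_all add: Let_def)
  then show ?thesis
    unfolding play_def by simp
qed

lemma play_step_in_edges:
  assumes "strategy VE E s" and "strategy VA E t" and "play VE s t v n \<in> VE \<union> VA"
  shows "(play VE s t v n, play VE s t v (Suc n)) \<in> E"
proof -
  let ?u = "play VE s t v n"
  define w where "w = butlast (hist VE s t v n)"
  have hist: "hist VE s t v n = w @ [?u]"
    unfolding w_def by (rule hist_eq_butlast_snoc_play)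
  have "(?u, s (w @ [?u])) \<in> E" if "?u \<in> VE"
    using assms(1) that unfolding strategy_def by blast
  moreover have "(?u, t (w @ [?u])) \<in> E" if "?u \<notin> VE"
    using assms(2,3) that unfolding strategy_def by blast
  ultimately show ?thesis
    unfolding play_Suc hist by simp
qed

lemma infset_if_always_followed_by:
  assumes "\<And>n. \<tau> n = x \<Longrightarrow> \<tau> (Suc n) = y" and "x \<in> infset \<tau>"
  shows "y \<in> infset \<tau>"
proof -
  have "Suc ` {n. \<tau> n = x} \<subseteq> {n. \<tau> n = y}"
    using assms(1) by auto
  moreover have "infinite (Suc ` {n. \<tau> n = x})"
    using assms(2) by (simp add: infset_def finite_image_iff)
  ultimately show ?thesis
    unfolding infset_def using finite_subset by blast
qed

lemma stays_at_absorbing: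
  assumes "\<tau> m = x" and "\<And>n. \<tau> n = x \<Longrightarrow> \<tau> (Suc n) = x" and "m \<le> n"
  shows "\<tau> n = x"
  using assms(3)
proof (induction n rule: dec_induct)
  case base
  show ?case by (rule assms(1))
next
  case (step n)
  then show ?case using assms(2) by blast
qed

lemma not_in_infset_if_absorbed:
  assumes "\<tau> m = x" and "\<And>n. \<tau> n = x \<Longrightarrow> \<tau> (Suc n) = x" and "y \<noteq> x"
  shows "y \<notin> infset \<tau>"
proof -
  have "{n. \<tau> n = y} \<subseteq> {..<m}"
  proof
    fix n
    assume "n \<in> {n. \<tau> n = y}"
    then have "\<tau> n \<noteq> x"
      using assms(3) by simp
    then show "n \<in> {..<m}"
      using stays_at_absorbing[OF assms(1,2), of n] by (auto simp: not_less[symmetric])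
  qed
  then show ?thesis
    unfolding infset_def using finite_subset by blast
qed

lemma fair_move_taken:
  assumes "fair Vi Ef \<tau>" and "u \<in> Vi" and "u \<in> infset \<tau>" and "(u, u') \<in> Ef"
  obtains n where "\<tau> n = u" and "\<tau> (Suc n) = u'"
proof -
  have "infinite {n. moves \<tau> n = (u, u')}"
    using assms unfolding fair_def infset_def by blast
  then obtain n where "moves \<tau> n = (u, u')"
    using not_finite_existsD by blast
  then show thesis
    using that unfolding moves_def by auto
qed

definition example_edges :: "(nat \<times> nat) set" where
  "example_edges = {(0, 1), (0, 2), (1, 0), (1, 3), (2, 2), (3, 3)}"

definition example_fair_edges :: "(nat \<times> nat) set" where
  "example_fair_edges = {(0, 1), (0, 2), (1, 0), (1, 3)}"

definition example_strategy :: "nat list \<Rightarrow> nat" where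
  "example_strategy h = (if last h = 1 then 0 else last h)"

lemma example_arena: "fair_arena {1, 2, 3} {0} example_edges example_fair_edges"
  unfolding fair_arena_def example_edges_def example_fair_edges_def by auto

lemma example_strategy_strategy: "strategy {1, 2, 3} example_edges example_strategy"
  unfolding strategy_def example_edges_def example_strategy_def by auto

lemma example_wins_against_fair:
  "wins_against_fair {1, 2, 3} {0} example_edges example_fair_edges {w. \<forall>i. w i \<in> {0, 1, 2}} 0"
  unfolding wins_against_fair_def
proof (intro exI[of _ example_strategy] conjI allI impI example_strategy_strategy)
  fix t
  assume t: "strategy {0} example_edges t"
  define p where "p = play {1, 2, 3} example_strategy t 0"
  assume fair_opponent: "fair {0} example_fair_edges p"
  have step_0: "p n = 0 \<Longrightarrow> p (Suc n) \<in> {1, 2}" for n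
    using play_step_in_edges[OF example_strategy_strategy t, of 0 n]
    unfolding p_def example_edges_def by auto
  have step_1: "p n = 1 \<Longrightarrow> p (Suc n) = 0" for n
    unfolding p_def play_Suc by (simp add: example_strategy_def play_def)
  have step_2: "p n = 2 \<Longrightarrow> p (Suc n) = 2" for n
    unfolding p_def play_Suc by (simp add: example_strategy_def play_def)
  have "p n \<in> {0, 1, 2}" for n
    using step_0 step_1 step_2 by (induction n) (auto simp: p_def)
  then show "p \<in> {w. \<forall>i. w i \<in> {0, 1, 2}}"
    by blast
  have "0 \<notin> infset p"
  proof
    assume "0 \<in> infset p"
    then obtain n where "p (Suc n) = 2"
      using fair_move_taken[OF fair_opponent] unfolding example_fair_edges_def by blast
    with \<open>0 \<in> infset p\<close> show False
      using not_in_infset_if_absorbed[of p _ 2 0] step_2 by simp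
  qed
  then have "1 \<notin> infset p"
    using infset_if_always_followed_by[of p 1 0] step_1 by blast
  then show "fair {1, 2, 3} example_fair_edges p"
    unfolding fair_def example_fair_edges_def by auto
qed

lemma example_not_wins_fairly:
  "\<not> wins_fairly {1, 2, 3} {0} example_edges example_fair_edges {w. \<forall>i. w i \<in> {0, 1, 2}} 0"
  unfolding wins_fairly_def
proof (intro notI, elim exE conjE)
  fix s
  assume s: "strategy {1, 2, 3} example_edges s"
    and wins: "\<forall>t. strategy {0} example_edges t \<longrightarrow>
      fair {1, 2, 3} example_fair_edges (play {1, 2, 3} s t 0) \<and>
      (fair {0} example_fair_edges (play {1, 2, 3} s t 0) \<longrightarrow>
        play {1, 2, 3} s t 0 \<in> {w. \<forall>i. w i \<in> {0, 1, 2}})"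
  define t :: "nat list \<Rightarrow> nat" where "t = (\<lambda>_. 1)"
  have t: "strategy {0} example_edges t"
    unfolding strategy_def example_edges_def t_def by simp
  define p where "p = play {1, 2, 3} s t 0"
  have step_0: "p n = 0 \<Longrightarrow> p (Suc n) = 1" for n
    unfolding p_def play_Suc by (simp add: t_def)
  have step_1: "p n = 1 \<Longrightarrow> p (Suc n) \<in> {0, 3}" for n
    using play_step_in_edges[OF s t, of 0 n] unfolding p_def example_edges_def by auto
  have step_3: "p n = 3 \<Longrightarrow> p (Suc n) = 3" for n
    using play_step_in_edges[OF s t, of 0 n] unfolding p_def example_edges_def by auto
  have fair_p: "fair {1, 2, 3} example_fair_edges p"
    and wins_p: "fair {0} example_fair_edges p \<Longrightarrow> \<forall>i. p i \<in> {0, 1, 2}"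
    using wins t unfolding p_def by auto
  show False
  proof (cases "\<exists>m. p m = 3")
    case True
    then obtain m where "p m = 3" by blast
    then have "0 \<notin> infset p"
      using not_in_infset_if_absorbed[of p m 3 0] step_3 by simp
    then have "fair {0} example_fair_edges p"
      unfolding fair_def by simp
    then have "p m \<in> {0, 1, 2}"
      using wins_p by blast
    with \<open>p m = 3\<close> show False by simp
  next
    case False
    then have range_p: "p n \<in> {0, 1}" for n
      using step_0 step_1 by (induction n) (auto simp: p_def)
    have "\<exists>n\<ge>m. p n = 1" for m
      using range_p[of m] step_0[of m] by (metis insertE le_Suc_eq order_refl singletonD)
    then have "1 \<in> infset p"
      unfolding infset_def finite_nat_set_iff_bounded by (auto simp: not_less)
    then obtain n where "p (Suc n) = 3"
      using fair_move_taken[OF fair_p] unfolding example_fair_edges_def by blast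
    with False show False by blast
  qed
qed

theorem lemma4:
  shows "(\<forall>(VE :: 'v set) VA E Ef \<alpha> v.
            fair_arena VE VA E Ef \<and> omega_regular (VE \<union> VA) \<alpha> \<and> v \<in> VE \<union> VA \<longrightarrow>
            (\<exists>s. strategy VE E s \<and> (\<forall>t. strategy VA E t \<longrightarrow>
                fair VE Ef (play VE s t v) \<and> (fair VA Ef (play VE s t v) \<longrightarrow> play VE s t v \<in> \<alpha>)))
            \<longrightarrow>
            (\<exists>s. strategy VE E s \<and> (\<forall>t. strategy VA E t \<longrightarrow>
                fair VA Ef (play VE s t v) \<longrightarrow> fair VE Ef (play VE s t v) \<and> play VE s t v \<in> \<alpha>)))
       \<and>
       (\<exists>(VE :: nat set) VA E Ef \<alpha> v.
            fair_arena VE VA E Ef \<and> omega_regular (VE \<union> VA) \<alpha> \<and> v \<in> VE \<union> VA \<and>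
            (\<exists>s. strategy VE E s \<and> (\<forall>t. strategy VA E t \<longrightarrow>
                fair VA Ef (play VE s t v) \<longrightarrow> fair VE Ef (play VE s t v) \<and> play VE s t v \<in> \<alpha>)) \<and>
            \<not> (\<exists>s. strategy VE E s \<and> (\<forall>t. strategy VA E t \<longrightarrow>
                fair VE Ef (play VE s t v) \<and> (fair VA Ef (play VE s t v) \<longrightarrow> play VE s t v \<in> \<alpha>))))"
proof (fold wins_fairly_def wins_against_fair_def, intro conjI)
  show "\<forall>(VE :: 'v set) VA E Ef \<alpha> v.
            fair_arena VE VA E Ef \<and> omega_regular (VE \<union> VA) \<alpha> \<and> v \<in> VE \<union> VA \<longrightarrow>
            wins_fairly VE VA E Ef \<alpha> v \<longrightarrow> wins_against_fair VE VA E Ef \<alpha> v"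
    by (simp add: wins_fairly_imp_wins_against_fair)
  have "omega_regular ({1, 2, 3} \<union> {0}) {w. \<forall>i. w i \<in> {0, 1, 2 :: nat}}"
    by (rule omega_regular_always) auto
  then show "\<exists>(VE :: nat set) VA E Ef \<alpha> v.
            fair_arena VE VA E Ef \<and> omega_regular (VE \<union> VA) \<alpha> \<and> v \<in> VE \<union> VA \<and>
            wins_against_fair VE VA E Ef \<alpha> v \<and> \<not> wins_fairly VE VA E Ef \<alpha> v"
    using example_arena example_wins_against_fair example_not_wins_fairly by blast
qed

end
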